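(* Let $M\ge2$ and consider a hierarchical system as described in the context. For $l\in\{1,\dots,M\}$ let $L^{(l)}_e=K^{(l)}L^{(l)}_D$. Then $\lambda(L^{(l)}_e)=\lambda(L^{(l)})\subset\mathbb{R}$; in particular $\lambda(L^{(l)})$ is the same for every choice of the stochastic row vectors $C^{(m)}_p$. Moreover, with $L=\sum_{l=1}^ML^{(l)}$, \[ \lambda(L)=\{0\}\cup\big(\lambda(L^{(1)}_e)\setminus\{0\}\big)\cup\cdots\cup\big(\lambda(L^{(M)}_e)\setminus\{0\}\big). \]
   Context: Hierarchical structure. Fix an integer $M\ge 2$ and positive integers $N^{(1)},\dots,N^{(M)}$; set $N^{(M+1)}:=1$. For each $l\in\{1,\dots,M\}$ the $N^{(l)}$ nodes of layer $l$ are partitioned into $N^{(l+1)}$ groups $G^{(l)}_1,\dots,G^{(l)}_{N^{(l+1)}}$ of sizes $k^{(l)}_p\ge1$ (so $\sum_pk^{(l)}_p=N^{(l)}$), numbered consecutively: group $G^{(l)}_p$ consists of nodes $\sum_{m<p}k^{(l)}_m+1,\dots,\sum_{m\le p}k^{(l)}_m$ of layer $l$. Each group $G^{(l)}_p$ carries a connected undirected graph with binary adjacency matrix; $L^{(l)}_p$ is its Laplacian (degree matrix minus adjacency matrix), and $L^{(l)}_D=\mathrm{diag}(L^{(l)}_1,\dots,L^{(l)}_{N^{(l+1)}})$ (block diagonal). Weights: positive constants $a_1,\dots,a_{N^{(1)}}$; $a^{(1)}_i=a_i$, $a^{(l+1)}_p=\sum_{i\in G^{(l)}_p}a^{(l)}_i$;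 $K^{(l)}=\mathrm{diag}(a^{(l)}_1,\dots,a^{(l)}_{N^{(l)}})^{-1}$. For $l=1,\dots,M-1$: $B^{(l)}=\mathrm{diag}(\mathbf{1}_{k^{(l)}_1},\dots,\mathbf{1}_{k^{(l)}_{N^{(l+1)}}})\in\mathbb{R}^{N^{(l)}\times N^{(l+1)}}$ ($\mathbf 1_k$ all-ones column vector), $C^{(l)}=\mathrm{diag}(C^{(l)}_1,\dots,C^{(l)}_{N^{(l+1)}})\in\mathbb{R}^{N^{(l+1)}\times N^{(l)}}$ with each $C^{(l)}_p\in\mathbb{R}^{1\times k^{(l)}_p}$ having nonnegative entries summing to $1$. $L^{(1)}=K^{(1)}L^{(1)}_D$ and $L^{(l)}=B^{(1)}\cdots B^{(l-1)}K^{(l)}L^{(l)}_DC^{(l-1)}\cdots C^{(1)}$ for $l=2,\dots,M$. $\lambda(A)$ is the set of (distinct) eigenvalues of $A$. *)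

theory Defs
  imports Complex_Main "Jordan_Normal_Form.Char_Poly"
begin

text \<open>Layers are numbered 1..M. Nodes of layer l are 0-indexed:
  0..<N l. The groups of layer l are 0-indexed: p < N (Suc l); group p has
  size k l p and consists of nodes goff k l p ..< goff k l p + k l p.
  E l p i j is the (binary, symmetric, loop-free) adjacency relation of the
  graph carried by group p of layer l, on local vertices 0..<k l p.
  c l p j (j < k l p) is the j-th entry of the stochastic row vector C^(l)_p.
  a i (i < N 1) are the positive weights.\<close>

definition goff :: "(nat \<Rightarrow> nat \<Rightarrow> nat) \<Rightarrow> nat \<Rightarrow> nat \<Rightarrow> nat" where
  "goff k l p = (\<Sum>m<p. k l m)"

definition in_group :: "(nat \<Rightarrow> nat \<Rightarrow> nat) \<Rightarrow> nat \<Rightarrow> nat \<Rightarrow> nat \<Rightarrow> bool" where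
  "in_group k l p i \<longleftrightarrow> goff k l p \<le> i \<and> i < goff k l p + k l p"

definition graph_connected :: "nat \<Rightarrow> (nat \<Rightarrow> nat \<Rightarrow> bool) \<Rightarrow> bool" where
  "graph_connected n E \<longleftrightarrow>
     (\<forall>i<n. \<forall>j<n. (\<lambda>x y. x < n \<and> y < n \<and> E x y)\<^sup>*\<^sup>* i j)"

definition lap_entry :: "nat \<Rightarrow> (nat \<Rightarrow> nat \<Rightarrow> bool) \<Rightarrow> nat \<Rightarrow> nat \<Rightarrow> real" where
  "lap_entry n E i j =
     (if i = j then real (card {m. m < n \<and> E i m}) else if E i j then -1 else 0)"

fun aw :: "(nat \<Rightarrow> nat \<Rightarrow> nat) \<Rightarrow> (nat \<Rightarrow> real) \<Rightarrow> nat \<Rightarrow> nat \<Rightarrow> real" where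
  "aw k a 0 i = 0"
| "aw k a (Suc 0) i = a i"
| "aw k a (Suc (Suc l)) p = (\<Sum>i\<in>{goff k (Suc l) p..<goff k (Suc l) p + k (Suc l) p}. aw k a (Suc l) i)"

definition LD :: "(nat \<Rightarrow> nat) \<Rightarrow> (nat \<Rightarrow> nat \<Rightarrow> nat) \<Rightarrow> (nat \<Rightarrow> nat \<Rightarrow> nat \<Rightarrow> nat \<Rightarrow> bool)
                   \<Rightarrow> nat \<Rightarrow> real mat" where
  "LD N k E l = mat (N l) (N l) (\<lambda>(i, j).
      if (\<exists>p<N (Suc l). in_group k l p i \<and> in_group k l p j)
      then (let p = (THE p. p < N (Suc l) \<and> in_group k l p i)
            in lap_entry (k l p) (E l p) (i - goff k l p) (j - goff k l p))
      else 0)"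

definition Kmat :: "(nat \<Rightarrow> nat) \<Rightarrow> (nat \<Rightarrow> nat \<Rightarrow> nat) \<Rightarrow> (nat \<Rightarrow> real) \<Rightarrow> nat \<Rightarrow> real mat" where
  "Kmat N k a l = mat (N l) (N l) (\<lambda>(i, j). if i = j then 1 / aw k a l i else 0)"

definition Bmat :: "(nat \<Rightarrow> nat) \<Rightarrow> (nat \<Rightarrow> nat \<Rightarrow> nat) \<Rightarrow> nat \<Rightarrow> real mat" where
  "Bmat N k l = mat (N l) (N (Suc l)) (\<lambda>(i, p). if in_group k l p i then 1 else 0)"

definition Cmat :: "(nat \<Rightarrow> nat) \<Rightarrow> (nat \<Rightarrow> nat \<Rightarrow> nat) \<Rightarrow> (nat \<Rightarrow> nat \<Rightarrow> nat \<Rightarrow> real) \<Rightarrow> nat \<Rightarrow> real mat" where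
  "Cmat N k c l = mat (N (Suc l)) (N l) (\<lambda>(p, i). if in_group k l p i then c l p (i - goff k l p) else 0)"

fun Bprod :: "(nat \<Rightarrow> nat) \<Rightarrow> (nat \<Rightarrow> nat \<Rightarrow> nat) \<Rightarrow> nat \<Rightarrow> real mat" where
  "Bprod N k 0 = 1\<^sub>m (N 1)"
| "Bprod N k (Suc 0) = 1\<^sub>m (N 1)"
| "Bprod N k (Suc (Suc l)) = Bprod N k (Suc l) * Bmat N k (Suc l)"

fun Cprod :: "(nat \<Rightarrow> nat) \<Rightarrow> (nat \<Rightarrow> nat \<Rightarrow> nat) \<Rightarrow> (nat \<Rightarrow> nat \<Rightarrow> nat \<Rightarrow> real) \<Rightarrow> nat \<Rightarrow> real mat" where
  "Cprod N k c 0 = 1\<^sub>m (N 1)"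
| "Cprod N k c (Suc 0) = 1\<^sub>m (N 1)"
| "Cprod N k c (Suc (Suc l)) = Cmat N k c (Suc l) * Cprod N k c (Suc l)"

definition Le :: "(nat \<Rightarrow> nat) \<Rightarrow> (nat \<Rightarrow> nat \<Rightarrow> nat) \<Rightarrow> (nat \<Rightarrow> nat \<Rightarrow> nat \<Rightarrow> nat \<Rightarrow> bool)
                  \<Rightarrow> (nat \<Rightarrow> real) \<Rightarrow> nat \<Rightarrow> real mat" where
  "Le N k E a l = Kmat N k a l * LD N k E l"

definition Lmat :: "(nat \<Rightarrow> nat) \<Rightarrow> (nat \<Rightarrow> nat \<Rightarrow> nat) \<Rightarrow> (nat \<Rightarrow> nat \<Rightarrow> nat \<Rightarrow> nat \<Rightarrow> bool)
                  \<Rightarrow> (nat \<Rightarrow> real) \<Rightarrow> (nat \<Rightarrow> nat \<Rightarrow> nat \<Rightarrow> real) \<Rightarrow> nat \<Rightarrow> real mat" where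
  "Lmat N k E a c l = Bprod N k l * Le N k E a l * Cprod N k c l"

fun Ltot :: "(nat \<Rightarrow> nat) \<Rightarrow> (nat \<Rightarrow> nat \<Rightarrow> nat) \<Rightarrow> (nat \<Rightarrow> nat \<Rightarrow> nat \<Rightarrow> nat \<Rightarrow> bool)
                  \<Rightarrow> (nat \<Rightarrow> real) \<Rightarrow> (nat \<Rightarrow> nat \<Rightarrow> nat \<Rightarrow> real) \<Rightarrow> nat \<Rightarrow> real mat" where
  "Ltot N k E a c 0 = 0\<^sub>m (N 1) (N 1)"
| "Ltot N k E a c (Suc m) = Ltot N k E a c m + Lmat N k E a c (Suc m)"

definition eigvals :: "real mat \<Rightarrow> complex set" where
  "eigvals A = {z. eigenvalue (map_mat complex_of_real A) z}"

end

theory Submission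
  imports Defs
begin

(* For T = X + B S C with C B = 1 and X B = 0 one has
   spec T = spec S \<union> (spec X - {0}) as soon as 0 \<in> spec S: the columns of B carry
   eigenvectors of S to eigenvectors of T (T B = B S), while a left eigenvector y of T
   either satisfies y B = 0, and is then a left eigenvector of X, or yields the left
   eigenvector y B of S; conversely a left eigenvector of X for a nonzero eigenvalue is
   killed by B and is therefore one of T.
   Every L_e^(l) annihilates B^(l) (the rows of a graph Laplacian sum to zero),
   C^(l) B^(l) = 1 (the rows of C^(l) are stochastic), and the total Laplacian is the
   nested sum L_e^(1) + B^(1) (L_e^(2) + B^(2) (...) C^(2)) C^(1), so downward induction
   over the layers gives the union formula; the case X = 0 gives spec L^(l) = spec L_e^(l).
   The spectrum of L_e^(l) = K^(l) L_D^(l) is real because L_D^(l) is symmetric and K^(l)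
   is a positive diagonal matrix. *)

section \<open>Lifting spectra\<close>

lemma vec_nonzero_index:
  assumes "v \<in> carrier_vec n" "v \<noteq> 0\<^sub>v n"
  obtains i where "i < n" "v $ i \<noteq> 0"
  using assms by (metis eq_vecI carrier_vecD index_zero_vec)

lemma smult_vec_eq_zeroD:
  fixes v :: "'a::field vec"
  assumes "v \<in> carrier_vec n" "x \<cdot>\<^sub>v v = 0\<^sub>v n"
  shows "x = 0 \<or> v = 0\<^sub>v n"
proof (rule disjCI)
  assume "v \<noteq> 0\<^sub>v n"
  then obtain i where i: "i < n" "v $ i \<noteq> 0" using vec_nonzero_index assms(1) by blast
  have "x * v $ i = 0" using assms i by (metis index_smult_vec(1) index_zero_vec(1) carrier_vecD)
  then show "x = 0" using i by simp
qed

lemma mult_mat_vec_zero [simp]: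
  "A \<in> carrier_mat nr nc \<Longrightarrow> A *\<^sub>v 0\<^sub>v nc = (0\<^sub>v nr :: 'a::comm_ring_1 vec)"
  by (intro eq_vecI) auto

lemma zero_mult_mat_vec [simp]:
  "v \<in> carrier_vec nc \<Longrightarrow> 0\<^sub>m nr nc *\<^sub>v v = (0\<^sub>v nr :: 'a::comm_ring_1 vec)"
  by (intro eq_vecI) (auto simp: scalar_prod_def)

lemma index_mult_mat_sum:
  assumes "A \<in> carrier_mat nr n" "B \<in> carrier_mat n nc" "i < nr" "j < nc"
  shows "(A * B) $$ (i, j) = (\<Sum>m<n. A $$ (i, m) * B $$ (m, j))"
  using assms by (auto simp: scalar_prod_def atLeast0LessThan intro!: sum.cong)

lemma mult_add_lifted_mult:
  assumes P: "P \<in> carrier_mat r n" and X: "X \<in> carrier_mat n n" and B: "B \<in> carrier_mat n m"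
    and S: "S \<in> carrier_mat m m" and C: "C \<in> carrier_mat m n" and Q: "Q \<in> carrier_mat n r'"
  shows "P * (X + B * S * C) * Q = P * X * Q + (P * B) * S * (C * Q)"
proof -
  have BSC: "B * S * C \<in> carrier_mat n n" using B S C by auto
  have "P * (X + B * S * C) * Q = P * X * Q + P * (B * S * C) * Q"
    unfolding mult_add_distrib_mat[OF P X BSC]
    by (rule add_mult_distrib_mat[OF mult_carrier_mat[OF P X] mult_carrier_mat[OF P BSC] Q])
  also have "P * (B * S * C) = P * (B * S) * C"
    by (rule assoc_mult_mat[OF P mult_carrier_mat[OF B S] C, symmetric])
  also have "P * (B * S) = P * B * S" by (rule assoc_mult_mat[OF P B S, symmetric])
  also have "P * B * S * C * Q = P * B * S * (C * Q)"
    by (rule assoc_mult_mat[OF mult_carrier_mat[OF mult_carrier_mat[OF P B] S] C Q])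
  finally show ?thesis .
qed

lemma map_mat_of_real_add:
  "A \<in> carrier_mat nr nc \<Longrightarrow> B \<in> carrier_mat nr nc \<Longrightarrow>
   map_mat complex_of_real (A + B) = map_mat complex_of_real A + map_mat complex_of_real B"
  by (intro eq_matI) auto

lemma map_mat_of_real_zero [simp]:
  "map_mat complex_of_real (0\<^sub>m nr nc) = 0\<^sub>m nr nc"
  by (intro eq_matI) auto

lemma eigenvalueI:
  assumes "A \<in> carrier_mat n n" "v \<in> carrier_vec n" "v \<noteq> 0\<^sub>v n" "A *\<^sub>v v = x \<cdot>\<^sub>v v"
  shows "eigenvalue A x"
  using assms unfolding eigenvalue_def eigenvector_def by auto

lemma eigenvalueE:
  assumes "A \<in> carrier_mat n n" "eigenvalue A x"
  obtains v where "v \<in> carrier_vec n" "v \<noteq> 0\<^sub>v n" "A *\<^sub>v v = x \<cdot>\<^sub>v v"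
  using assms unfolding eigenvalue_def eigenvector_def by auto

lemma eigenvalue_transpose_iff:
  fixes A :: "'a::field mat"
  assumes "A \<in> carrier_mat n n"
  shows "eigenvalue A\<^sup>T x \<longleftrightarrow> eigenvalue A x"
  using assms by (simp add: eigenvalue_root_char_poly[of _ n])

lemma eigenvalue_zero_matD:
  fixes x :: "'a::field"
  assumes "eigenvalue (0\<^sub>m n n) x"
  shows "x = 0"
proof -
  obtain v where v: "v \<in> carrier_vec n" "v \<noteq> 0\<^sub>v n" "0\<^sub>m n n *\<^sub>v v = x \<cdot>\<^sub>v v"
    using eigenvalueE[OF zero_carrier_mat assms] .
  have "x \<cdot>\<^sub>v v = 0\<^sub>v n" using v by simp
  then show ?thesis using smult_vec_eq_zeroD v by blast
qed

lemma eigenvalue_intertwined: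
  fixes T :: "'a::field mat"
  assumes T: "T \<in> carrier_mat n n" and S: "S \<in> carrier_mat m m"
    and B: "B \<in> carrier_mat n m" and C: "C \<in> carrier_mat m n"
    and CB: "C * B = 1\<^sub>m m" and TB: "T * B = B * S" and ev: "eigenvalue S x"
  shows "eigenvalue T x"
proof -
  obtain w where w: "w \<in> carrier_vec m" "w \<noteq> 0\<^sub>v m" "S *\<^sub>v w = x \<cdot>\<^sub>v w"
    using eigenvalueE[OF S ev] .
  have "T *\<^sub>v (B *\<^sub>v w) = B *\<^sub>v (S *\<^sub>v w)"
    using T B S w by (metis TB assoc_mult_mat_vec)
  also have "\<dots> = x \<cdot>\<^sub>v (B *\<^sub>v w)" using B w by (simp add: mult_mat_vec)
  finally have "T *\<^sub>v (B *\<^sub>v w) = x \<cdot>\<^sub>v (B *\<^sub>v w)" .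
  moreover have "C *\<^sub>v (B *\<^sub>v w) = w"
    using B C w by (metis CB assoc_mult_mat_vec one_mult_mat_vec)
  then have "B *\<^sub>v w \<noteq> 0\<^sub>v n" using C w by auto
  ultimately show ?thesis using B w by (intro eigenvalueI[OF T]) auto
qed

context
  fixes X S B C :: "'a::field mat" and n m :: nat
  assumes X: "X \<in> carrier_mat n n" and S: "S \<in> carrier_mat m m"
    and B: "B \<in> carrier_mat m n" and C: "C \<in> carrier_mat n m"
    and BX: "B * X = 0\<^sub>m m n"
begin

lemma mult_mat_vec_add_factored:
  "y \<in> carrier_vec n \<Longrightarrow> (X + C * S * B) *\<^sub>v y = X *\<^sub>v y + C *\<^sub>v (S *\<^sub>v (B *\<^sub>v y))"
  using X S B C by (simp add: add_mult_distrib_mat_vec[of _ n n] assoc_mult_mat_vec[of _ n m _ n])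

lemma eigenvalue_add_factored_cases:
  assumes BC: "B * C = 1\<^sub>m m" and ev: "eigenvalue (X + C * S * B) x"
  shows "eigenvalue S x \<or> eigenvalue X x"
proof -
  have U: "X + C * S * B \<in> carrier_mat n n" using X S B C by auto
  obtain y where y: "y \<in> carrier_vec n" "y \<noteq> 0\<^sub>v n" "(X + C * S * B) *\<^sub>v y = x \<cdot>\<^sub>v y"
    using eigenvalueE[OF U ev] .
  show ?thesis
  proof (cases "B *\<^sub>v y = 0\<^sub>v m")
    case True
    then have "X *\<^sub>v y = x \<cdot>\<^sub>v y" using y X C S mult_mat_vec_add_factored by simp
    then show ?thesis using y by (blast intro: eigenvalueI[OF X])
  next
    case False
    have "x \<cdot>\<^sub>v (B *\<^sub>v y) = B *\<^sub>v ((X + C * S * B) *\<^sub>v y)"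
      unfolding y(3) using y(1) B by (simp add: mult_mat_vec)
    also have "\<dots> = B *\<^sub>v (X *\<^sub>v y) + B *\<^sub>v (C *\<^sub>v (S *\<^sub>v (B *\<^sub>v y)))"
      unfolding mult_mat_vec_add_factored[OF y(1)] using y(1) X S B C
      by (intro mult_add_distrib_mat_vec[of _ m n]) auto
    also have "\<dots> = (B * X) *\<^sub>v y + (B * C) *\<^sub>v (S *\<^sub>v (B *\<^sub>v y))"
      using y(1) X S B C by (simp add: assoc_mult_mat_vec[of _ m n])
    also have "\<dots> = S *\<^sub>v (B *\<^sub>v y)" using y S B BX BC by simp
    finally have "S *\<^sub>v (B *\<^sub>v y) = x \<cdot>\<^sub>v (B *\<^sub>v y)" ..
    then have "eigenvalue S x" using False y B by (intro eigenvalueI[OF S]) auto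
    then show ?thesis ..
  qed
qed

lemma eigenvalue_add_factored_nonzero:
  assumes ev: "eigenvalue X x" and x: "x \<noteq> 0"
  shows "eigenvalue (X + C * S * B) x"
proof -
  obtain y where y: "y \<in> carrier_vec n" "y \<noteq> 0\<^sub>v n" "X *\<^sub>v y = x \<cdot>\<^sub>v y"
    using eigenvalueE[OF X ev] .
  have "x \<cdot>\<^sub>v (B *\<^sub>v y) = (B * X) *\<^sub>v y" using y X B by (simp add: mult_mat_vec)
  also have "\<dots> = 0\<^sub>v m" using y BX by simp
  finally have "B *\<^sub>v y = 0\<^sub>v m"
    using smult_vec_eq_zeroD[OF mult_mat_vec_carrier[OF B y(1)]] x by blast
  then have "(X + C * S * B) *\<^sub>v y = x \<cdot>\<^sub>v y"
    using y X S C by (simp add: mult_mat_vec_add_factored)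
  then show ?thesis using y X S B C by (intro eigenvalueI[of _ n]) auto
qed

end

lemma eigenvalue_add_lifted_iff:
  fixes X :: "'a::field mat"
  assumes X: "X \<in> carrier_mat n n" and S: "S \<in> carrier_mat m m"
    and B: "B \<in> carrier_mat n m" and C: "C \<in> carrier_mat m n"
    and CB: "C * B = 1\<^sub>m m" and XB: "X * B = 0\<^sub>m n m" and S0: "eigenvalue S 0"
  shows "eigenvalue (X + B * S * C) x \<longleftrightarrow> eigenvalue S x \<or> eigenvalue X x \<and> x \<noteq> 0"
proof -
  define T where "T = X + B * S * C"
  have T: "T \<in> carrier_mat n n" unfolding T_def using X S B C by auto
  have "T * B = X * B + B * (S * (C * B))"
    unfolding T_def using X S B C
    by (simp add: add_mult_distrib_mat[of _ n n] assoc_mult_mat[of _ n m _ n])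
  then have TB: "T * B = B * S" using XB CB B S by simp
  have Tt: "T\<^sup>T = X\<^sup>T + C\<^sup>T * S\<^sup>T * B\<^sup>T"
    unfolding T_def using X S B C
    by (simp add: transpose_add[of _ n n] transpose_mult[of _ n m _ n] transpose_mult[of _ m m _ n]
        assoc_mult_mat[of _ n m _ m])
  have BtCt: "B\<^sup>T * C\<^sup>T = 1\<^sub>m m" using B C CB by (metis transpose_mult transpose_one)
  have BtXt: "B\<^sup>T * X\<^sup>T = 0\<^sub>m m n" using B X XB by (metis transpose_mult zero_transpose_mat)
  have Xt: "X\<^sup>T \<in> carrier_mat n n" and St: "S\<^sup>T \<in> carrier_mat m m"
    and Bt: "B\<^sup>T \<in> carrier_mat m n" and Ct: "C\<^sup>T \<in> carrier_mat n m" using X S B C by auto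
  note cases = eigenvalue_add_factored_cases[OF Xt St Bt Ct BtXt BtCt]
  note nonzero = eigenvalue_add_factored_nonzero[OF Xt St Bt Ct BtXt]
  have "eigenvalue T x \<longleftrightarrow> eigenvalue T\<^sup>T x" using eigenvalue_transpose_iff[OF T] by simp
  then show ?thesis
    using cases nonzero eigenvalue_intertwined[OF T S B C CB TB] S0
      eigenvalue_transpose_iff[OF X] eigenvalue_transpose_iff[OF S]
    unfolding T_def[symmetric] Tt by blast
qed

lemma eigvals_add_lifted:
  fixes X S B C :: "real mat"
  assumes X: "X \<in> carrier_mat n n" and S: "S \<in> carrier_mat m m"
    and B: "B \<in> carrier_mat n m" and C: "C \<in> carrier_mat m n"
    and CB: "C * B = 1\<^sub>m m" and XB: "X * B = 0\<^sub>m n m" and S0: "0 \<in> eigvals S"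
  shows "eigvals (X + B * S * C) = eigvals S \<union> (eigvals X - {0})"
proof -
  let ?c = "map_mat complex_of_real"
  have "?c (B * S * C) = ?c B * ?c S * ?c C"
    using S B C by (metis of_real_hom.mat_hom_mult mult_carrier_mat)
  then have "?c (X + B * S * C) = ?c X + ?c B * ?c S * ?c C"
    using X S B C by (simp add: map_mat_of_real_add[of _ n n])
  moreover have "?c C * ?c B = 1\<^sub>m m"
    using CB B C by (metis of_real_hom.mat_hom_mult of_real_hom.mat_hom_one)
  moreover have "?c X * ?c B = 0\<^sub>m n m"
    using XB X B by (metis of_real_hom.mat_hom_mult map_mat_of_real_zero)
  ultimately show ?thesis
    using eigenvalue_add_lifted_iff[of "?c X" n "?c S" m "?c B" "?c C"] X S B C S0
    unfolding eigvals_def by auto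
qed

lemma eigvals_lifted:
  fixes L P Q :: "real mat"
  assumes L: "L \<in> carrier_mat m m" and P: "P \<in> carrier_mat n m" and Q: "Q \<in> carrier_mat m n"
    and QP: "Q * P = 1\<^sub>m m" and L0: "0 \<in> eigvals L"
  shows "eigvals (P * L * Q) = eigvals L"
proof -
  have "eigvals (0\<^sub>m n n) \<subseteq> {0}"
    unfolding eigvals_def by (auto dest: eigenvalue_zero_matD)
  moreover have "0\<^sub>m n n + P * L * Q = P * L * Q" using P L Q by simp
  ultimately show ?thesis
    using eigvals_add_lifted[OF zero_carrier_mat L P Q QP _ L0] P by auto
qed

lemma zero_in_eigvals_if_mult_zero:
  fixes X B :: "real mat"
  assumes X: "X \<in> carrier_mat n n" and B: "B \<in> carrier_mat n m"
    and XB: "X * B = 0\<^sub>m n m" and j: "j < m" and Bj: "col B j \<noteq> 0\<^sub>v n"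
  shows "0 \<in> eigvals X"
proof -
  have "X *\<^sub>v col B j = col (X * B) j" by (rule col_mult2[OF X B j, symmetric])
  also have "\<dots> = 0 \<cdot>\<^sub>v col B j" unfolding XB using B j by (intro eq_vecI) auto
  finally have "X *\<^sub>v col B j = 0 \<cdot>\<^sub>v col B j" .
  then have "eigenvalue X 0" using B Bj by (intro eigenvalueI[OF X]) auto
  then show ?thesis unfolding eigvals_def using of_real_hom.eigenvalue_hom[OF X] by fastforce
qed

section \<open>Real spectra of weighted symmetric matrices\<close>

lemma symmetric_hermitian_form_real:
  assumes "\<forall>i<n. \<forall>j<n. G i j = G j i"
  shows "(\<Sum>i<n. \<Sum>j<n. complex_of_real (G i j) * cnj (v i) * v j) \<in> \<real>"
proof -
  let ?q = "\<Sum>i<n. \<Sum>j<n. complex_of_real (G i j) * cnj (v i) * v j"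
  have "cnj ?q = (\<Sum>i<n. \<Sum>j<n. complex_of_real (G i j) * v i * cnj (v j))" by simp
  also have "\<dots> = (\<Sum>j<n. \<Sum>i<n. complex_of_real (G i j) * v i * cnj (v j))" by (rule sum.swap)
  also have "\<dots> = ?q" using assms by (intro sum.cong refl) (simp add: mult_ac)
  finally show ?thesis using Reals_cnj_iff by blast
qed

lemma eigvals_real_if_weighted_symmetric:
  fixes A :: "real mat"
  assumes A: "A \<in> carrier_mat n n" and w: "\<forall>i<n. w i > 0"
    and sym: "\<forall>i<n. \<forall>j<n. w i * A $$ (i,j) = w j * A $$ (j,i)"
  shows "eigvals A \<subseteq> \<real>"
proof
  fix x assume "x \<in> eigvals A"
  then obtain v where v: "v \<in> carrier_vec n" "v \<noteq> 0\<^sub>v n" "map_mat of_real A *\<^sub>v v = x \<cdot>\<^sub>v v"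
    using eigenvalueE[of "map_mat of_real A" n] A unfolding eigvals_def by auto
  have row: "(\<Sum>j<n. complex_of_real (A $$ (i,j)) * v $ j) = x * v $ i" if "i < n" for i
    using arg_cong[OF v(3), of "\<lambda>u. u $ i"] that A v(1)
    by (auto simp: scalar_prod_def atLeast0LessThan intro!: sum.cong)
  define r where "r = (\<Sum>i<n. w i * (cmod (v $ i))\<^sup>2)"
  have "(\<Sum>i<n. \<Sum>j<n. complex_of_real (w i * A $$ (i,j)) * cnj (v $ i) * v $ j)
        = (\<Sum>i<n. complex_of_real (w i) * cnj (v $ i)
          * (\<Sum>j<n. complex_of_real (A $$ (i,j)) * v $ j))"
    by (simp add: sum_distrib_left mult_ac)
  also have "\<dots> = (\<Sum>i<n. complex_of_real (w i) * cnj (v $ i) * (x * v $ i))"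
    by (intro sum.cong refl) (simp add: row)
  also have "\<dots> = x * complex_of_real r"
    unfolding r_def of_real_sum sum_distrib_left
    by (intro sum.cong refl) (simp add: complex_norm_square[symmetric] mult_ac)
  finally have "x * complex_of_real r \<in> \<real>"
    using symmetric_hermitian_form_real[of n "\<lambda>i j. w i * A $$ (i,j)" "\<lambda>i. v $ i"] sym by simp
  moreover obtain i where "i < n" "v $ i \<noteq> 0" using vec_nonzero_index v(1,2) by blast
  then have "r > 0" unfolding r_def using w by (intro sum_pos2[of _ i]) auto
  then have "x = x * complex_of_real r / complex_of_real r" by simp
  ultimately show "x \<in> \<real>" by (metis Reals_divide Reals_of_real)
qed

section \<open>The hierarchical Laplacian\<close>

lemma goff_Suc: "goff k l (Suc p) = goff k l p + k l p"
  unfolding goff_def by simp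

lemma goff_mono: "p \<le> q \<Longrightarrow> goff k l p \<le> goff k l q"
  unfolding goff_def by (intro sum_mono2) auto

lemma in_group_unique:
  assumes "in_group k l p i" "in_group k l q i"
  shows "p = q"
proof (rule ccontr)
  assume "p \<noteq> q"
  then have "goff k l (Suc (min p q)) \<le> goff k l (max p q)" by (intro goff_mono) auto
  then show False
    using assms unfolding in_group_def goff_Suc by (cases "p \<le> q") (auto simp: min_def max_def)
qed

lemma in_group_cover: "i < goff k l n \<Longrightarrow> \<exists>p<n. in_group k l p i"
proof (induction n)
  case (Suc n)
  show ?case
  proof (cases "i < goff k l n")
    case True
    then obtain p where "p < n" "in_group k l p i" using Suc.IH by blast
    then show ?thesis using less_SucI by blast
  next
    case False
    then have "in_group k l n i" using Suc.prems by (simp add: in_group_def goff_Suc)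
    then show ?thesis by blast
  qed
qed (simp add: goff_def)

lemma sum_in_group:
  fixes f :: "nat \<Rightarrow> 'a::comm_monoid_add"
  assumes "goff k l p + k l p \<le> n"
  shows "(\<Sum>i<n. if in_group k l p i then f (i - goff k l p) else 0) = (\<Sum>j<k l p. f j)"
proof -
  let ?g = "goff k l p"
  have "(\<Sum>i<n. if in_group k l p i then f (i - ?g) else 0)
      = (\<Sum>i\<in>{i\<in>{..<n}. in_group k l p i}. f (i - ?g))"
    by (rule sum.inter_filter[symmetric]) auto
  also have "{i\<in>{..<n}. in_group k l p i} = {?g..<?g + k l p}" using assms by (auto simp: in_group_def)
  also have "(\<Sum>i\<in>{?g..<?g + k l p}. f (i - ?g)) = (\<Sum>j<k l p. f j)"
    using sum.shift_bounds_nat_ivl[of "\<lambda>i. f (i - ?g)" 0 ?g "k l p"]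
    by (simp add: add.commute atLeast0LessThan)
  finally show ?thesis .
qed

lemma lap_entry_row_sum:
  assumes "\<not> E i i" "i < n"
  shows "(\<Sum>j<n. lap_entry n E i j) = 0"
proof -
  have "lap_entry n E i j
      = (if j = i then real (card {m. m < n \<and> E i m}) else 0) + (if E i j then -1 else 0)" for j
    using assms unfolding lap_entry_def by auto
  then have "(\<Sum>j<n. lap_entry n E i j)
      = real (card {m. m < n \<and> E i m}) + (\<Sum>j<n. if E i j then -1 else 0)"
    using assms by (simp add: sum.distrib)
  also have "(\<Sum>j<n. if E i j then -1 else 0) = (\<Sum>j\<in>{m. m < n \<and> E i m}. -1::real)"
    by (simp add: sum.inter_filter[symmetric] lessThan_def conj_commute)
  finally show ?thesis by simp
qed

lemma lap_entry_sym:
  "E i j = E j i \<Longrightarrow> lap_entry n E i j = lap_entry n E j i"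
  unfolding lap_entry_def by auto

lemma LD_index:
  assumes p: "p < N (Suc l)" and i: "in_group k l p i" "i < N l" and j: "j < N l"
  shows "LD N k E l $$ (i, j) =
    (if in_group k l p j then lap_entry (k l p) (E l p) (i - goff k l p) (j - goff k l p) else 0)"
proof -
  have "(THE q. q < N (Suc l) \<and> in_group k l q i) = p" using p i in_group_unique by blast
  moreover have "(\<exists>q<N (Suc l). in_group k l q i \<and> in_group k l q j) \<longleftrightarrow> in_group k l p j"
    using p i in_group_unique by blast
  ultimately show ?thesis unfolding LD_def using i j by simp
qed

lemma Le_index:
  assumes "i < N l" "j < N l"
  shows "Le N k E a l $$ (i, j) = LD N k E l $$ (i, j) / aw k a l i"
proof -
  have "Le N k E a l $$ (i, j)
      = (\<Sum>m<N l. (if i = m then 1 / aw k a l i else 0) * LD N k E l $$ (m, j))"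
    unfolding Le_def using assms by (subst index_mult_mat_sum[of _ _ "N l"]) (auto simp: Kmat_def LD_def)
  also have "\<dots> = (\<Sum>m<N l. if m = i then LD N k E l $$ (i, j) / aw k a l i else 0)"
    by (intro sum.cong) auto
  also have "\<dots> = LD N k E l $$ (i, j) / aw k a l i" using assms by simp
  finally show ?thesis .
qed

lemma layer_carriers [simp]:
  "LD N k E l \<in> carrier_mat (N l) (N l)"
  "Kmat N k a l \<in> carrier_mat (N l) (N l)"
  "Le N k E a l \<in> carrier_mat (N l) (N l)"
  "Bmat N k l \<in> carrier_mat (N l) (N (Suc l))"
  "Cmat N k c l \<in> carrier_mat (N (Suc l)) (N l)"
  unfolding LD_def Kmat_def Le_def Bmat_def Cmat_def by auto

lemma Bprod_carrier: "1 \<le> l \<Longrightarrow> Bprod N k l \<in> carrier_mat (N 1) (N l)"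
  by (induction N k l rule: Bprod.induct) (auto intro: mult_carrier_mat[OF _ layer_carriers(4)])

lemma Cprod_carrier: "1 \<le> l \<Longrightarrow> Cprod N k c l \<in> carrier_mat (N l) (N 1)"
  by (induction N k c l rule: Cprod.induct) (auto intro: mult_carrier_mat[OF layer_carriers(5)])

lemma Bprod_Suc: "1 \<le> l \<Longrightarrow> Bprod N k (Suc l) = Bprod N k l * Bmat N k l"
  by (cases l) auto

lemma Cprod_Suc: "1 \<le> l \<Longrightarrow> Cprod N k c (Suc l) = Cmat N k c l * Cprod N k c l"
  by (cases l) auto

lemma Lmat_carrier: "1 \<le> l \<Longrightarrow> Lmat N k E a c l \<in> carrier_mat (N 1) (N 1)"
  unfolding Lmat_def by (meson Bprod_carrier Cprod_carrier layer_carriers(3) mult_carrier_mat)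

lemma Ltot_carrier: "Ltot N k E a c m \<in> carrier_mat (N 1) (N 1)"
proof (induction m)
  case (Suc m)
  then show ?case using Lmat_carrier[of "Suc m"] by (simp add: add_carrier_mat)
qed simp

lemma Ltot_pred: "0 < m \<Longrightarrow> Ltot N k E a c m = Ltot N k E a c (m - 1) + Lmat N k E a c m"
  by (cases m) auto

locale hierarchy =
  fixes M :: nat and N :: "nat \<Rightarrow> nat" and k :: "nat \<Rightarrow> nat \<Rightarrow> nat"
    and E :: "nat \<Rightarrow> nat \<Rightarrow> nat \<Rightarrow> nat \<Rightarrow> bool"
    and a :: "nat \<Rightarrow> real" and c :: "nat \<Rightarrow> nat \<Rightarrow> nat \<Rightarrow> real"
  assumes M_pos: "0 < M"
    and Npos: "\<forall>l\<in>{1..M}. N l > 0"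
    and Ntop: "N (Suc M) = 1"
    and kpos: "\<forall>l\<in>{1..M}. \<forall>p<N (Suc l). k l p \<ge> 1"
    and ksum: "\<forall>l\<in>{1..M}. (\<Sum>p<N (Suc l). k l p) = N l"
    and Esym: "\<forall>l\<in>{1..M}. \<forall>p<N (Suc l). \<forall>i<k l p. \<forall>j<k l p. E l p i j = E l p j i"
    and Eirr: "\<forall>l\<in>{1..M}. \<forall>p<N (Suc l). \<forall>i<k l p. \<not> E l p i i"
    and apos: "\<forall>i<N 1. a i > 0"
    and csum: "\<forall>l\<in>{1..<M}. \<forall>p<N (Suc l). (\<Sum>j<k l p. c l p j) = 1"
begin

lemma N_Suc_pos: "l \<in> {1..M} \<Longrightarrow> 0 < N (Suc l)"
  using Npos Ntop by (cases "l = M") auto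

lemma group_bound:
  assumes "l \<in> {1..M}" "p < N (Suc l)"
  shows "goff k l p + k l p \<le> N l"
proof -
  have "goff k l (Suc p) \<le> goff k l (N (Suc l))" using assms by (intro goff_mono) auto
  then show ?thesis using ksum assms by (simp add: goff_def)
qed

lemma in_some_group:
  assumes "l \<in> {1..M}" "i < N l"
  obtains p where "p < N (Suc l)" "in_group k l p i"
  using in_group_cover[of i k l "N (Suc l)"] ksum assms by (auto simp: goff_def)

lemma LD_mult_Bmat:
  assumes l: "l \<in> {1..M}"
  shows "LD N k E l * Bmat N k l = 0\<^sub>m (N l) (N (Suc l))"
proof (rule eq_matI)
  fix i p
  assume "i < dim_row (0\<^sub>m (N l) (N (Suc l)) :: real mat)"
    and "p < dim_col (0\<^sub>m (N l) (N (Suc l)) :: real mat)"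
  then have i: "i < N l" and p: "p < N (Suc l)" by auto
  obtain q where q: "q < N (Suc l)" "in_group k l q i" using in_some_group[OF l i] .
  let ?lap = "\<lambda>j. lap_entry (k l q) (E l q) (i - goff k l q) j"
  have "(LD N k E l * Bmat N k l) $$ (i, p)
      = (\<Sum>j<N l. LD N k E l $$ (i, j) * Bmat N k l $$ (j, p))"
    using i p by (intro index_mult_mat_sum) auto
  also have "\<dots> = (\<Sum>j<N l. if in_group k l p j \<and> in_group k l q j then ?lap (j - goff k l q) else 0)"
    using i p q by (auto simp: LD_index Bmat_def intro!: sum.cong)
  also have "\<dots> = 0"
  proof (cases "p = q")
    case True
    have "(\<Sum>j<N l. if in_group k l q j then ?lap (j - goff k l q) else 0) = (\<Sum>j<k l q. ?lap j)"
      using group_bound[OF l q(1)] by (rule sum_in_group)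
    also have "\<dots> = 0" using Eirr l q by (intro lap_entry_row_sum) (auto simp: in_group_def)
    finally show ?thesis using True by simp
  next
    case False
    then show ?thesis using in_group_unique by (auto intro!: sum.neutral)
  qed
  finally show "(LD N k E l * Bmat N k l) $$ (i, p) = 0\<^sub>m (N l) (N (Suc l)) $$ (i, p)"
    using i p by simp
qed (simp_all add: LD_def Bmat_def)

lemma Le_mult_Bmat:
  assumes "l \<in> {1..M}"
  shows "Le N k E a l * Bmat N k l = 0\<^sub>m (N l) (N (Suc l))"
proof -
  have "Le N k E a l * Bmat N k l = Kmat N k a l * (LD N k E l * Bmat N k l)"
    unfolding Le_def by (rule assoc_mult_mat[OF layer_carriers(2,1,4)])
  then show ?thesis using LD_mult_Bmat[OF assms] right_mult_zero_mat[OF layer_carriers(2)] by simp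
qed

lemma Cmat_mult_Bmat:
  assumes l: "l \<in> {1..<M}"
  shows "Cmat N k c l * Bmat N k l = 1\<^sub>m (N (Suc l))"
proof (rule eq_matI)
  fix p q
  assume "p < dim_row (1\<^sub>m (N (Suc l)) :: real mat)" and "q < dim_col (1\<^sub>m (N (Suc l)) :: real mat)"
  then have p: "p < N (Suc l)" and q: "q < N (Suc l)" by auto
  have "(Cmat N k c l * Bmat N k l) $$ (p, q)
      = (\<Sum>i<N l. Cmat N k c l $$ (p, i) * Bmat N k l $$ (i, q))"
    using p q by (intro index_mult_mat_sum) auto
  also have "\<dots>
      = (\<Sum>i<N l. if in_group k l p i then (if p = q then c l p (i - goff k l p) else 0) else 0)"
    using p q in_group_unique by (auto simp: Cmat_def Bmat_def intro!: sum.cong)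
  also have "\<dots> = (\<Sum>j<k l p. if p = q then c l p j else 0)"
    using l p by (intro sum_in_group group_bound) auto
  also have "\<dots> = 1\<^sub>m (N (Suc l)) $$ (p, q)" using csum l p q by auto
  finally show "(Cmat N k c l * Bmat N k l) $$ (p, q) = 1\<^sub>m (N (Suc l)) $$ (p, q)" .
qed (simp_all add: Cmat_def Bmat_def)

lemma Cprod_mult_Bprod:
  assumes "1 \<le> l" "l \<le> M"
  shows "Cprod N k c l * Bprod N k l = 1\<^sub>m (N l)"
  using assms
proof (induction l rule: dec_induct)
  case (step n)
  have C: "Cprod N k c n \<in> carrier_mat (N n) (N 1)" and B: "Bprod N k n \<in> carrier_mat (N 1) (N n)"
    using step Cprod_carrier Bprod_carrier by auto
  have "Cprod N k c (Suc n) * Bprod N k (Suc n)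
      = (Cmat N k c n * Cprod N k c n) * (Bprod N k n * Bmat N k n)"
    using step by (simp add: Bprod_Suc Cprod_Suc)
  also have "\<dots> = Cmat N k c n * (Cprod N k c n * (Bprod N k n * Bmat N k n))"
    by (rule assoc_mult_mat[OF layer_carriers(5)[of N k c n] C
          mult_carrier_mat[OF B layer_carriers(4)[of N k n]]])
  also have "Cprod N k c n * (Bprod N k n * Bmat N k n) = Cprod N k c n * Bprod N k n * Bmat N k n"
    by (rule assoc_mult_mat[OF C B layer_carriers(4)[of N k n], symmetric])
  also have "\<dots> = Bmat N k n" using step left_mult_one_mat[OF layer_carriers(4)[of N k n]] by simp
  also have "Cmat N k c n * Bmat N k n = 1\<^sub>m (N (Suc n))" using step Cmat_mult_Bmat by simp
  finally show ?case .
qed simp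

lemma zero_in_eigvals_Le:
  assumes l: "l \<in> {1..M}"
  shows "0 \<in> eigvals (Le N k E a l)"
proof (rule zero_in_eigvals_if_mult_zero[OF layer_carriers(3,4) Le_mult_Bmat[OF l]])
  show "0 < N (Suc l)" using N_Suc_pos[OF l] .
  have "1 \<le> k l 0" using kpos l N_Suc_pos[OF l] by blast
  then have "col (Bmat N k l) 0 $ 0 = 1"
    using l N_Suc_pos[OF l] Npos by (auto simp: Bmat_def in_group_def goff_def)
  then show "col (Bmat N k l) 0 \<noteq> 0\<^sub>v (N l)" using Npos l by auto
qed

lemma aw_pos:
  assumes "1 \<le> l" "l \<le> M" "i < N l"
  shows "aw k a l i > 0"
  using assms
proof (induction l arbitrary: i rule: dec_induct)
  case base
  then show ?case using apos by simp
next
  case (step n)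
  then obtain n' where n': "n = Suc n'" by (cases n) auto
  have n: "n \<in> {1..M}" using step by auto
  have "aw k a (Suc n) i = (\<Sum>j\<in>{goff k n i..<goff k n i + k n i}. aw k a n j)" using n' by simp
  also have "\<dots> > 0"
  proof (rule sum_pos)
    show "{goff k n i..<goff k n i + k n i} \<noteq> {}" using kpos n step by force
    show "aw k a n j > 0" if "j \<in> {goff k n i..<goff k n i + k n i}" for j
      using that group_bound[OF n, of i] step by auto
  qed simp
  finally show ?case .
qed

lemma LD_sym:
  assumes l: "l \<in> {1..M}" and i: "i < N l" and j: "j < N l"
  shows "LD N k E l $$ (i, j) = LD N k E l $$ (j, i)"
proof -
  obtain p where p: "p < N (Suc l)" "in_group k l p i" using in_some_group[OF l i] .
  obtain q where q: "q < N (Suc l)" "in_group k l q j" using in_some_group[OF l j] .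
  show ?thesis
  proof (cases "p = q")
    case True
    then show ?thesis using LD_index[OF p i j] LD_index[OF q j i] p q Esym l
      by (auto simp: in_group_def intro: lap_entry_sym)
  next
    case False
    then have "\<not> in_group k l p j" "\<not> in_group k l q i" using p q in_group_unique by blast+
    then show ?thesis using LD_index[OF p i j] LD_index[OF q j i] by simp
  qed
qed

lemma eigvals_Le_real:
  assumes l: "l \<in> {1..M}"
  shows "eigvals (Le N k E a l) \<subseteq> \<real>"
proof (rule eigvals_real_if_weighted_symmetric[OF layer_carriers(3)])
  show pos: "\<forall>i<N l. aw k a l i > 0" using aw_pos l by auto
  show "\<forall>i<N l. \<forall>j<N l. aw k a l i * Le N k E a l $$ (i, j) = aw k a l j * Le N k E a l $$ (j, i)"
  proof (intro allI impI)
    fix i j assume ij: "i < N l" "j < N l"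
    then have "aw k a l i \<noteq> 0" "aw k a l j \<noteq> 0" using pos by fastforce+
    then show "aw k a l i * Le N k E a l $$ (i, j) = aw k a l j * Le N k E a l $$ (j, i)"
      using LD_sym[OF l ij] by (simp add: Le_index ij)
  qed
qed

lemma eigvals_Lmat:
  assumes l: "l \<in> {1..M}"
  shows "eigvals (Lmat N k E a c l) = eigvals (Le N k E a l)"
proof -
  have "1 \<le> l" "l \<le> M" using l by auto
  then show ?thesis unfolding Lmat_def
    by (intro eigvals_lifted[OF layer_carriers(3) Bprod_carrier Cprod_carrier Cprod_mult_Bprod
          zero_in_eigvals_Le[OF l]])
qed

(* Lfrom m = L_e^(m) + B^(m) (Lfrom (m + 1)) C^(m) unrolls to the sum over l = m..M of
   B^(m) ... B^(l-1) L_e^(l) C^(l-1) ... C^(m), i.e. to the part L^(m) + ... + L^(M) of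
   the Laplacian seen from layer m. *)
function Lfrom :: "nat \<Rightarrow> real mat" where
  "Lfrom m = (if M \<le> m then Le N k E a M
              else Le N k E a m + Bmat N k m * Lfrom (Suc m) * Cmat N k c m)"
  by auto
termination by (relation "measure (\<lambda>m. M - m)") auto

declare Lfrom.simps [simp del]

lemma Lfrom_top: "Lfrom M = Le N k E a M"
  by (simp add: Lfrom.simps)

lemma Lfrom_step: "m < M \<Longrightarrow> Lfrom m = Le N k E a m + Bmat N k m * Lfrom (Suc m) * Cmat N k c m"
  by (simp add: Lfrom.simps)

lemma Lfrom_carrier: "m \<le> M \<Longrightarrow> Lfrom m \<in> carrier_mat (N m) (N m)"
proof (induction m rule: inc_induct)
  case (step n)
  then show ?case unfolding Lfrom_step[OF step(2)] by (auto intro!: add_carrier_mat mult_carrier_mat)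
qed (simp add: Lfrom_top)

lemma eigvals_Lfrom:
  assumes "m \<le> M" "1 \<le> m"
  shows "eigvals (Lfrom m) = {0} \<union> (\<Union>l\<in>{m..M}. eigvals (Le N k E a l) - {0})"
  using assms
proof (induction m rule: inc_induct)
  case base
  then show ?case using zero_in_eigvals_Le[of M] M_pos by (auto simp: Lfrom_top)
next
  case (step n)
  then have IH: "eigvals (Lfrom (Suc n)) = {0} \<union> (\<Union>l\<in>{Suc n..M}. eigvals (Le N k E a l) - {0})"
    by simp
  have "eigvals (Lfrom n) = eigvals (Lfrom (Suc n)) \<union> (eigvals (Le N k E a n) - {0})"
    unfolding Lfrom_step[OF step(2)] using step IH Lfrom_carrier[of "Suc n"]
    by (intro eigvals_add_lifted[of _ "N n" _ "N (Suc n)"] Cmat_mult_Bmat Le_mult_Bmat) auto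
  also have "\<dots> = {0} \<union> (\<Union>l\<in>{n..M}. eigvals (Le N k E a l) - {0})"
    unfolding IH using step(2) by (auto simp: atLeastAtMost_insertL[symmetric])
  finally show ?case .
qed

lemma Lfrom_lift_step:
  assumes "1 \<le> m" "m < M"
  shows "Bprod N k m * Lfrom m * Cprod N k c m
    = Lmat N k E a c m + Bprod N k (Suc m) * Lfrom (Suc m) * Cprod N k c (Suc m)"
  unfolding Lfrom_step[OF assms(2)] Lmat_def Bprod_Suc[OF assms(1)] Cprod_Suc[OF assms(1)]
  by (intro mult_add_lifted_mult[of _ "N 1" "N m" _ _ "N (Suc m)" _ _ _ "N 1"]
      Bprod_carrier Cprod_carrier Lfrom_carrier layer_carriers) (use assms in simp_all)

lemma Ltot_split:
  assumes "m \<le> M" "1 \<le> m"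
  shows "Ltot N k E a c M = Ltot N k E a c (m - 1) + Bprod N k m * Lfrom m * Cprod N k c m"
  using assms
proof (induction m rule: inc_induct)
  case base
  show ?case using Ltot_pred[OF M_pos] by (simp add: Lmat_def Lfrom_top)
next
  case (step n)
  have lifted: "Bprod N k (Suc n) * Lfrom (Suc n) * Cprod N k c (Suc n) \<in> carrier_mat (N 1) (N 1)"
    using step
    by (intro mult_carrier_mat[of _ _ "N (Suc n)"] Bprod_carrier Cprod_carrier Lfrom_carrier) simp_all
  have "Ltot N k E a c M = Ltot N k E a c n + Bprod N k (Suc n) * Lfrom (Suc n) * Cprod N k c (Suc n)"
    using step by simp
  also have "Ltot N k E a c n = Ltot N k E a c (n - 1) + Lmat N k E a c n"
    using step by (intro Ltot_pred) simp
  also have "\<dots> + Bprod N k (Suc n) * Lfrom (Suc n) * Cprod N k c (Suc n) = Ltot N k E a c (n - 1)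
      + (Lmat N k E a c n + Bprod N k (Suc n) * Lfrom (Suc n) * Cprod N k c (Suc n))"
    using step
    by (intro assoc_add_mat[OF Ltot_carrier[of N k E a c "n - 1"] Lmat_carrier[of n N k E a c] lifted])
      simp
  also have "Lmat N k E a c n + Bprod N k (Suc n) * Lfrom (Suc n) * Cprod N k c (Suc n)
      = Bprod N k n * Lfrom n * Cprod N k c n"
    using step by (intro Lfrom_lift_step[symmetric]) simp_all
  finally show ?case .
qed

lemma Ltot_eq_Lfrom: "Ltot N k E a c M = Lfrom 1"
proof -
  have "Lfrom 1 \<in> carrier_mat (N 1) (N 1)" using M_pos by (intro Lfrom_carrier) simp
  then show ?thesis using Ltot_split[of 1] M_pos by simp
qed

lemma eigvals_Ltot:
  "eigvals (Ltot N k E a c M) = {0} \<union> (\<Union>l\<in>{1..M}. eigvals (Le N k E a l) - {0})"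
  using eigvals_Lfrom[of 1] M_pos by (simp add: Ltot_eq_Lfrom)

end

theorem theorem2:
  fixes M :: nat and N :: "nat \<Rightarrow> nat" and k :: "nat \<Rightarrow> nat \<Rightarrow> nat"
    and E :: "nat \<Rightarrow> nat \<Rightarrow> nat \<Rightarrow> nat \<Rightarrow> bool"
    and a :: "nat \<Rightarrow> real" and c :: "nat \<Rightarrow> nat \<Rightarrow> nat \<Rightarrow> real"
  assumes M2: "M \<ge> 2"
    and Npos: "\<forall>l\<in>{1..M}. N l > 0"
    and Ntop: "N (Suc M) = 1"
    and kpos: "\<forall>l\<in>{1..M}. \<forall>p<N (Suc l). k l p \<ge> 1"
    and ksum: "\<forall>l\<in>{1..M}. (\<Sum>p<N (Suc l). k l p) = N l"
    and Esym: "\<forall>l\<in>{1..M}. \<forall>p<N (Suc l). \<forall>i<k l p. \<forall>j<k l p. E l p i j = E l p j i"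
    and Eirr: "\<forall>l\<in>{1..M}. \<forall>p<N (Suc l). \<forall>i<k l p. \<not> E l p i i"
    and Econn: "\<forall>l\<in>{1..M}. \<forall>p<N (Suc l). graph_connected (k l p) (E l p)"
    and apos: "\<forall>i<N 1. a i > 0"
    and cnonneg: "\<forall>l\<in>{1..<M}. \<forall>p<N (Suc l). \<forall>j<k l p. c l p j \<ge> 0"
    and csum: "\<forall>l\<in>{1..<M}. \<forall>p<N (Suc l). (\<Sum>j<k l p. c l p j) = 1"
  shows "(\<forall>l\<in>{1..M}. eigvals (Le N k E a l) = eigvals (Lmat N k E a c l)
                       \<and> eigvals (Lmat N k E a c l) \<subseteq> \<real>)
     \<and> eigvals (Ltot N k E a c M) = {0} \<union> (\<Union>l\<in>{1..M}. eigvals (Le N k E a l) - {0})"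
proof -
  interpret hierarchy M N k E a c
    using M2 Npos Ntop kpos ksum Esym Eirr apos csum by unfold_locales auto
  show ?thesis using eigvals_Lmat eigvals_Le_real eigvals_Ltot by auto
qed

end
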